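(* Let $\Delta$ be a finite set of quantifier-free insertion queries over the graph schema $\{E\}$. Then $(q_{\mathrm{Reach}},\Delta\cup\Delta_E)$ can be maintained in DynFO for directed acyclic graphs. Furthermore, this can be done by a program such that for every quantifier-free insertion query $\rho(\bar p)$ in $\Delta$ there is a first-order formula $\gamma_\rho(\bar p)$ over the input and auxiliary schema (a guard) such that in every state reached for an acyclic graph $G$ and every tuple $\bar a$, $\gamma_\rho(\bar a)$ holds if and only if $\rho(\bar a)(G)$ contains a cycle.
   Context: Framework. A schema $\tau$ consists of relation symbols with arities and constant symbols; a database over $\tau$ with a finite domain $D$ interprets them. A replacement rule for a relation symbol $R$ is $R := \mu_R(\bar p;\bar x)$, where $\mu_R$ is a first-order formula over $\tau$, $\bar x$ has the arity of $R$, and $\bar p$ is a tuple of parameter variables. A replacement query $\rho(\bar p)$ is a set of replacement rules for distinct relation symbols, all with the same parameter tuple $\bar p$; it is parameter-free if $\bar p$ is empty, and quantifier-free (resp. existential, i.e. in $\mathrm{FO}[\exists^*]$) if all its formulas are. A change $\delta=\rho(\bar a)$ consists of a replacement query $\rho$ and a tuple $\bar a$ of domain elements of the arity of $\bar p$; $\delta(\mathcal D)$ is obtained from $\mathcal D$ by replacing every relation $R$ having a rule in $\rho$ by $\{\bar b : \mathcal D\models \mu_R(\bar a;\bar b)\}$. An insertion query is one in which every $\mu_R$ has the form $R(\bar x)\lor\varphi_R$; a deletion query one in which every $\mu_R$ has the form $R(\bar x)\land\varphi_R$. The single-tuple insertion $\mathrm{ins}_R(\bar p)$ is $R:=R(\bar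 x)\lor \bar x=\bar p$, the single-tuple deletion $\mathrm{del}_R(\bar p)$ is $R:=R(\bar x)\land\neg(\bar x=\bar p)$; $\Delta_\tau$ is the set of all single-tuple insertions and deletions for the relation symbols of $\tau$ ($\Delta_E$ for graphs with edge relation $E$). A dynamic program with input schema $\tau_{in}$ and auxiliary schema $\tau_{aux}$ operates on states $(D,\mathcal I,\mathcal A)$ consisting of an input database $\mathcal I$ and an auxiliary database $\mathcal A$ over a common fixed finite domain $D$. For every allowed replacement query $\rho(\bar p)$ and every auxiliary symbol $T$ it has an update formula $\varphi_T(\bar p;\bar x)$ over $\tau_{in}\cup\tau_{aux}$. On a change $\delta=\rho(\bar a)$ the new state has input $\delta(\mathcal I)$ and each $T$ becomes $\{\bar b : (\mathcal I,\mathcal A)\models\varphi_T(\bar a,\bar b)\}$, evaluated in the old state. A dynamic query is a pair $(q,\Delta)$ of a query $q$ and a set $\Delta$ of replacement queries. A program maintains $(q,\Delta)$, $q$ of arity $k$, if it has a $k$-ary auxiliary relation $Q$ such that for every domain, starting from the empty input and empty auxiliary database, after every nonempty sequence $\alpha$ of changes from $\Delta$ the relation $Q$ equals $q(\alpha(\mathcal I_\emptyset))$. DynFO is the class of dynamic queries maintainable with first-order update formulas; DynProp with quantifier-free update formulas. When maintenance is "for" a class of inputs, only change sequences all of whose intermediate inputs lie in that class are considered. Graphs are structures with one binary relation $E$; $q_{\mathrm{Reach}}$ maps a directed graph to the set of pairs $(u,v)$ such that there is a directed path from $u$ to $v$. *)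

theory Defs
  imports Main
begin

datatype ('r, 'v) fm =
    Rel 'r "'v list"
  | Eq 'v 'v
  | Neg "('r, 'v) fm"
  | Conj "('r, 'v) fm" "('r, 'v) fm"
  | Disj "('r, 'v) fm" "('r, 'v) fm"
  | Ex 'v "('r, 'v) fm"
  | All 'v "('r, 'v) fm"

fun holds :: "'d set \<Rightarrow> ('r \<Rightarrow> 'd list set) \<Rightarrow> ('v \<Rightarrow> 'd) \<Rightarrow> ('r, 'v) fm \<Rightarrow> bool" where
  "holds D I v (Rel r xs) = (map v xs \<in> I r)"
| "holds D I v (Eq x y) = (v x = v y)"
| "holds D I v (Neg \<phi>) = (\<not> holds D I v \<phi>)"
| "holds D I v (Conj \<phi> \<psi>) = (holds D I v \<phi> \<and> holds D I v \<psi>)"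
| "holds D I v (Disj \<phi> \<psi>) = (holds D I v \<phi> \<or> holds D I v \<psi>)"
| "holds D I v (Ex x \<phi>) = (\<exists>d\<in>D. holds D I (v(x := d)) \<phi>)"
| "holds D I v (All x \<phi>) = (\<forall>d\<in>D. holds D I (v(x := d)) \<phi>)"

fun fvars :: "('r, 'v) fm \<Rightarrow> 'v set" where
  "fvars (Rel r xs) = set xs"
| "fvars (Eq x y) = {x, y}"
| "fvars (Neg \<phi>) = fvars \<phi>"
| "fvars (Conj \<phi> \<psi>) = fvars \<phi> \<union> fvars \<psi>"
| "fvars (Disj \<phi> \<psi>) = fvars \<phi> \<union> fvars \<psi>"
| "fvars (Ex x \<phi>) = fvars \<phi> - {x}"
| "fvars (All x \<phi>) = fvars \<phi> - {x}"

fun rels :: "('r, 'v) fm \<Rightarrow> 'r set" where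
  "rels (Rel r xs) = {r}"
| "rels (Eq x y) = {}"
| "rels (Neg \<phi>) = rels \<phi>"
| "rels (Conj \<phi> \<psi>) = rels \<phi> \<union> rels \<psi>"
| "rels (Disj \<phi> \<psi>) = rels \<phi> \<union> rels \<psi>"
| "rels (Ex x \<phi>) = rels \<phi>"
| "rels (All x \<phi>) = rels \<phi>"

fun qfree :: "('r, 'v) fm \<Rightarrow> bool" where
  "qfree (Rel r xs) = True"
| "qfree (Eq x y) = True"
| "qfree (Neg \<phi>) = qfree \<phi>"
| "qfree (Conj \<phi> \<psi>) = (qfree \<phi> \<and> qfree \<psi>)"
| "qfree (Disj \<phi> \<psi>) = (qfree \<phi> \<and> qfree \<psi>)"
| "qfree (Ex x \<phi>) = False"
| "qfree (All x \<phi>) = False"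

datatype sym = Edge | Aux nat

text \<open>Variables: parameter variables P i, tuple variables X j (the \<open>\<bar>x\<close> of a rule / update
  formula), and further (bound) variables V k.\<close>
datatype var = P nat | X nat | V nat

type_synonym state = "sym \<Rightarrow> nat list set"

definition env :: "nat list \<Rightarrow> nat list \<Rightarrow> var \<Rightarrow> nat" where
  "env as bs x = (case x of P i \<Rightarrow> as ! i | X j \<Rightarrow> bs ! j | V k \<Rightarrow> 0)"

definition param_vars :: "nat \<Rightarrow> var set" where
  "param_vars k = {P i | i. i < k}"

definition tuple_vars :: "nat \<Rightarrow> var set" where
  "tuple_vars n = {X j | j. j < n}"

text \<open>A replacement query over the graph schema has a parameter tuple P 0, ..., P (k-1) and
  at most one rule E := mu(p; x0, x1) (None = no rule).\<close>
record gquery =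
  nparams :: nat
  rule :: "(sym, var) fm option"

definition wf_gquery :: "gquery \<Rightarrow> bool" where
  "wf_gquery \<rho> = (case rule \<rho> of None \<Rightarrow> True
     | Some \<mu> \<Rightarrow> rels \<mu> \<subseteq> {Edge} \<and> fvars \<mu> \<subseteq> param_vars (nparams \<rho>) \<union> tuple_vars 2)"

definition qf_insertion_query :: "gquery \<Rightarrow> bool" where
  "qf_insertion_query \<rho> = (wf_gquery \<rho> \<and> (case rule \<rho> of None \<Rightarrow> True
     | Some \<mu> \<Rightarrow> (\<exists>\<phi>. qfree \<phi> \<and> \<mu> = Disj (Rel Edge [X 0, X 1]) \<phi>)))"

definition ins_E :: gquery where
  "ins_E = \<lparr>nparams = 2, rule = Some (Disj (Rel Edge [X 0, X 1])
                                        (Conj (Eq (X 0) (P 0)) (Eq (X 1) (P 1))))\<rparr>"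

definition del_E :: gquery where
  "del_E = \<lparr>nparams = 2, rule = Some (Conj (Rel Edge [X 0, X 1])
                                        (Neg (Conj (Eq (X 0) (P 0)) (Eq (X 1) (P 1)))))\<rparr>"

definition Delta_E :: "gquery set" where
  "Delta_E = {ins_E, del_E}"

text \<open>The edge relation of the graph resulting from applying the change rho(as) to the
  graph with edge relation G over domain D (only the input relation E is visible).\<close>
definition apply_change :: "nat set \<Rightarrow> gquery \<Rightarrow> nat list \<Rightarrow> nat list set \<Rightarrow> nat list set" where
  "apply_change D \<rho> as G = (case rule \<rho> of None \<Rightarrow> G
     | Some \<mu> \<Rightarrow> {bs. length bs = 2 \<and> set bs \<subseteq> D \<and>
                     holds D (\<lambda>r. if r = Edge then G else {}) (env as bs) \<mu>})"

definition edges :: "nat list set \<Rightarrow> nat rel" where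
  "edges G = {(u, v). [u, v] \<in> G}"

definition reach :: "nat set \<Rightarrow> nat list set \<Rightarrow> nat list set" where
  "reach D G = {[u, v] | u v. u \<in> D \<and> v \<in> D \<and> (u, v) \<in> (edges G)\<^sup>*}"

definition inputs :: "nat set \<Rightarrow> (gquery \<times> nat list) list \<Rightarrow> nat list set" where
  "inputs D cs = fold (\<lambda>(\<rho>, as) G. apply_change D \<rho> as G) cs {}"

definition valid_seq :: "nat set \<Rightarrow> gquery set \<Rightarrow> (gquery \<times> nat list) list \<Rightarrow> bool" where
  "valid_seq D \<Delta> cs = ((\<forall>(\<rho>, as) \<in> set cs. \<rho> \<in> \<Delta> \<and> length as = nparams \<rho> \<and> set as \<subseteq> D)
      \<and> (\<forall>n \<le> length cs. acyclic (edges (inputs D (take n cs)))))"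

text \<open>A dynamic program: a finite relational auxiliary schema (symbols auxs with arities ar),
  a designated binary auxiliary symbol qsym (the query relation Q), and, for each
  replacement query rho and auxiliary symbol T, an update formula upd rho T.\<close>
record dprog =
  auxs :: "nat set"
  ar :: "nat \<Rightarrow> nat"
  qsym :: nat
  upd :: "gquery \<Rightarrow> nat \<Rightarrow> (sym, var) fm"

definition fo_over :: "dprog \<Rightarrow> var set \<Rightarrow> (sym, var) fm \<Rightarrow> bool" where
  "fo_over \<Pi> vs \<phi> = (rels \<phi> \<subseteq> insert Edge (Aux ` auxs \<Pi>) \<and> fvars \<phi> \<subseteq> vs)"

definition wf_dprog :: "gquery set \<Rightarrow> dprog \<Rightarrow> bool" where
  "wf_dprog \<Delta> \<Pi> = (finite (auxs \<Pi>) \<and> qsym \<Pi> \<in> auxs \<Pi> \<and> ar \<Pi> (qsym \<Pi>) = 2 \<and>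
     (\<forall>\<rho>\<in>\<Delta>. \<forall>T\<in>auxs \<Pi>.
        fo_over \<Pi> (param_vars (nparams \<rho>) \<union> tuple_vars (ar \<Pi> T)) (upd \<Pi> \<rho> T)))"

text \<open>One step: the input is changed, every auxiliary relation is recomputed by its update
  formula evaluated in the old state.\<close>
definition step :: "nat set \<Rightarrow> dprog \<Rightarrow> gquery \<times> nat list \<Rightarrow> state \<Rightarrow> state" where
  "step D \<Pi> c s = (case c of (\<rho>, as) \<Rightarrow> (\<lambda>r. case r of
       Edge \<Rightarrow> apply_change D \<rho> as (s Edge)
     | Aux T \<Rightarrow> (if T \<in> auxs \<Pi> then
          {bs. length bs = ar \<Pi> T \<and> set bs \<subseteq> D \<and> holds D s (env as bs) (upd \<Pi> \<rho> T)}
        else {})))"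

definition run :: "nat set \<Rightarrow> dprog \<Rightarrow> (gquery \<times> nat list) list \<Rightarrow> state" where
  "run D \<Pi> cs = fold (step D \<Pi>) cs (\<lambda>_. {})"

text \<open>The program maintains (q_Reach, Delta) for acyclic graphs (DynFO: update formulas are
  arbitrary first-order formulas).\<close>
definition maintains_reach_dag :: "gquery set \<Rightarrow> dprog \<Rightarrow> bool" where
  "maintains_reach_dag \<Delta> \<Pi> = (wf_dprog \<Delta> \<Pi> \<and>
     (\<forall>D. finite D \<longrightarrow> (\<forall>cs. cs \<noteq> [] \<longrightarrow> valid_seq D \<Delta> cs \<longrightarrow>
        run D \<Pi> cs (Aux (qsym \<Pi>)) = reach D (inputs D cs))))"

definition correct_guard :: "gquery set \<Rightarrow> dprog \<Rightarrow> gquery \<Rightarrow> (sym, var) fm \<Rightarrow> bool" where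
  "correct_guard \<Delta> \<Pi> \<rho> \<gamma> = (fo_over \<Pi> (param_vars (nparams \<rho>)) \<gamma> \<and>
     (\<forall>D. finite D \<longrightarrow> (\<forall>cs. cs \<noteq> [] \<longrightarrow> valid_seq D \<Delta> cs \<longrightarrow>
        (\<forall>as. length as = nparams \<rho> \<longrightarrow> set as \<subseteq> D \<longrightarrow>
          (holds D (run D \<Pi> cs) (env as []) \<gamma> \<longleftrightarrow>
           \<not> acyclic (edges (apply_change D \<rho> as (inputs D cs))))))))"

end

theory Submission
  imports Defs
begin

text \<open>
  The program keeps the reachability relation of the current acyclic graph as its only auxiliary
  relation. Deleting an edge \<open>(a, b)\<close> is handled by the classical formula for DAGs: a path from
  \<open>x\<close> to \<open>y\<close> that used \<open>(a, b)\<close> survives iff some path leaves the ancestors of \<open>a\<close>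
  through an edge other than \<open>(a, b)\<close> and then reaches \<open>y\<close>.

  For a quantifier-free insertion \<open>\<rho>(as)\<close> the new edge relation \<open>M\<close> contains the old one \<open>E\<close>,
  so an \<open>M\<close>-path can be written as a chain
  \<open>x \<rightarrow>\<^sub>E\<^sup>* w\<^sub>1 \<rightarrow>\<^sub>M z\<^sub>1 \<rightarrow>\<^sub>E\<^sup>* \<dots> \<rightarrow>\<^sub>M z\<^sub>n \<rightarrow>\<^sub>E\<^sup>* y\<close> in which \<open>E\<^sup>*\<close> is available.
  For fixed \<open>z\<close>, whether \<open>(w, z) \<in> M\<close> depends only on the atomic type of \<open>w\<close> over \<open>as\<close> and on the
  \<open>E\<close>-edges between \<open>w\<close> and \<open>z\<close>. Hence if two \<open>M\<close>-steps of a chain start at vertices of the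
  same type, the chain can be shortcut, unless a short \<open>M\<close>-cycle appears. So both
  \<open>M\<^sup>*\<close> (when \<open>M\<close> is acyclic) and the existence of an \<open>M\<close>-cycle are witnessed by chains whose
  length is bounded by the number of types, which gives first-order update formulas and guards.
\<close>

section \<open>First-order formulas\<close>

lemma holds_cong_val:
  "\<forall>x\<in>fvars \<phi>. v x = v' x \<Longrightarrow> holds D I v \<phi> = holds D I v' \<phi>"
proof (induction \<phi> arbitrary: v v')
  case (Rel r xs)
  then show ?case by (simp cong: map_cong)
next
  case (Conj \<phi> \<psi>)
  have "holds D I v \<phi> = holds D I v' \<phi>" "holds D I v \<psi> = holds D I v' \<psi>"
    using Conj.prems by (auto intro!: Conj.IH)
  then show ?case by simp
next
  case (Disj \<phi> \<psi>)
  have "holds D I v \<phi> = holds D I v' \<phi>" "holds D I v \<psi> = holds D I v' \<psi>"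
    using Disj.prems by (auto intro!: Disj.IH)
  then show ?case by simp
next
  case (Ex x \<phi>)
  then have "holds D I (v(x := d)) \<phi> = holds D I (v'(x := d)) \<phi>" for d
    by (intro Ex.IH) auto
  then show ?case by simp
next
  case (All x \<phi>)
  then have "holds D I (v(x := d)) \<phi> = holds D I (v'(x := d)) \<phi>" for d
    by (intro All.IH) auto
  then show ?case by simp
qed simp_all

lemma holds_cong_rels:
  "(\<And>r. r \<in> rels \<phi> \<Longrightarrow> I r = I' r) \<Longrightarrow> holds D I v \<phi> = holds D I' v \<phi>"
  by (induction \<phi> arbitrary: v) auto

lemma holds_qfree_comp_inj_on:
  assumes "qfree \<phi>" and "v ` fvars \<phi> \<subseteq> S" and "inj_on f S"
    and "\<And>r xs. set xs \<subseteq> S \<Longrightarrow> map f xs \<in> I r \<longleftrightarrow> xs \<in> I r"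
  shows "holds D I (f \<circ> v) \<phi> = holds D I v \<phi>"
  using assms(1,2)
proof (induction \<phi>)
  case (Rel r xs)
  then have "set (map v xs) \<subseteq> S" by auto
  then show ?case by (metis assms(4) holds.simps(1) map_map)
next
  case (Eq x y)
  then show ?case using inj_on_eq_iff[OF assms(3)] by auto
qed auto

fun ren :: "('v \<Rightarrow> 'v) \<Rightarrow> ('r, 'v) fm \<Rightarrow> ('r, 'v) fm" where
  "ren \<sigma> (Rel r xs) = Rel r (map \<sigma> xs)"
| "ren \<sigma> (Eq x y) = Eq (\<sigma> x) (\<sigma> y)"
| "ren \<sigma> (Neg \<phi>) = Neg (ren \<sigma> \<phi>)"
| "ren \<sigma> (Conj \<phi> \<psi>) = Conj (ren \<sigma> \<phi>) (ren \<sigma> \<psi>)"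
| "ren \<sigma> (Disj \<phi> \<psi>) = Disj (ren \<sigma> \<phi>) (ren \<sigma> \<psi>)"
| "ren \<sigma> (Ex x \<phi>) = Ex (\<sigma> x) (ren \<sigma> \<phi>)"
| "ren \<sigma> (All x \<phi>) = All (\<sigma> x) (ren \<sigma> \<phi>)"

lemma holds_ren: "qfree \<phi> \<Longrightarrow> holds D I v (ren \<sigma> \<phi>) = holds D I (v \<circ> \<sigma>) \<phi>"
  by (induction \<phi>) (auto simp: comp_def)

lemma fvars_ren: "qfree \<phi> \<Longrightarrow> fvars (ren \<sigma> \<phi>) = \<sigma> ` fvars \<phi>"
  by (induction \<phi>) auto

lemma rels_ren [simp]: "rels (ren \<sigma> \<phi>) = rels \<phi>"
  by (induction \<phi>) auto

lemma param_tuple_vars_2_cases: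
  assumes "x \<in> param_vars k \<union> tuple_vars 2"
  obtains i where "x = P i" "i < k" | "x = X 0" | "x = X 1"
  using assms by (auto simp: param_vars_def tuple_vars_def less_2_cases_iff)

definition false_fm :: "('r, var) fm" where
  "false_fm = Ex (V 0) (Neg (Eq (V 0) (V 0)))"

fun Disj_list :: "('r, var) fm list \<Rightarrow> ('r, var) fm" where
  "Disj_list [] = false_fm"
| "Disj_list (\<phi> # \<phi>s) = Disj \<phi> (Disj_list \<phi>s)"

lemma holds_false_fm [simp]: "\<not> holds D I v false_fm"
  by (simp add: false_fm_def)

lemma holds_Disj_list [simp]: "holds D I v (Disj_list \<phi>s) \<longleftrightarrow> (\<exists>\<phi>\<in>set \<phi>s. holds D I v \<phi>)"
  by (induction \<phi>s) auto

lemma fvars_Disj_list: "(\<And>\<phi>. \<phi> \<in> set \<phi>s \<Longrightarrow> fvars \<phi> \<subseteq> A) \<Longrightarrow> fvars (Disj_list \<phi>s) \<subseteq> A"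
  by (induction \<phi>s) (auto simp: false_fm_def)

lemma rels_Disj_list: "(\<And>\<phi>. \<phi> \<in> set \<phi>s \<Longrightarrow> rels \<phi> \<subseteq> A) \<Longrightarrow> rels (Disj_list \<phi>s) \<subseteq> A"
  by (induction \<phi>s) (auto simp: false_fm_def)

section \<open>Chains\<close>

fun chain :: "'a rel \<Rightarrow> 'a rel \<Rightarrow> 'a \<Rightarrow> ('a \<times> 'a) list \<Rightarrow> 'a \<Rightarrow> bool" where
  "chain E M x [] y \<longleftrightarrow> (x, y) \<in> E\<^sup>*"
| "chain E M x ((w, z) # ps) y \<longleftrightarrow> (x, w) \<in> E\<^sup>* \<and> (w, z) \<in> M \<and> chain E M z ps y"

lemma chain_rtrancl_left: "(x, x') \<in> E\<^sup>* \<Longrightarrow> chain E M x' ps y \<Longrightarrow> chain E M x ps y"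
  by (cases ps) auto

lemma chain_rtrancl_right: "chain E M x ps y \<Longrightarrow> (y, y') \<in> E\<^sup>* \<Longrightarrow> chain E M x ps y'"
  by (induction ps arbitrary: x) auto

lemma chain_append: "chain E M x (ps @ qs) y \<longleftrightarrow> (\<exists>m. chain E M x ps m \<and> chain E M m qs y)"
proof (induction ps arbitrary: x)
  case Nil
  then show ?case using chain_rtrancl_left by auto
qed auto

lemma chain_append_Cons:
  "chain E M x (ps @ (w, z) # qs) y \<longleftrightarrow> chain E M x ps w \<and> chain E M w ((w, z) # qs) y"
  by (auto simp: chain_append intro: chain_rtrancl_right)

lemma chain_imp_rtrancl:
  assumes "E \<subseteq> M" and "chain E M x ps y"
  shows "(x, y) \<in> M\<^sup>*"
  using assms(2)
proof (induction ps arbitrary: x)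
  case Nil
  then show ?case using rtrancl_mono[OF assms(1)] by auto
next
  case (Cons p ps)
  obtain w z where "p = (w, z)" by fastforce
  with Cons have "(x, w) \<in> M\<^sup>*" "(w, z) \<in> M" "(z, y) \<in> M\<^sup>*"
    using rtrancl_mono[OF assms(1)] by auto
  then show ?case by (meson converse_rtrancl_into_rtrancl rtrancl_trans)
qed

lemma chain_imp_trancl: "E \<subseteq> M \<Longrightarrow> chain E M x ps y \<Longrightarrow> ps \<noteq> [] \<Longrightarrow> (x, y) \<in> M\<^sup>+"
proof (cases ps)
  case (Cons p qs)
  assume "E \<subseteq> M" "chain E M x ps y"
  with Cons obtain w z where "(x, w) \<in> M\<^sup>*" "(w, z) \<in> M" "(z, y) \<in> M\<^sup>*"
    by (cases p) (auto dest: chain_imp_rtrancl rtrancl_mono[THEN subsetD])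
  then show ?thesis by (meson rtrancl_into_trancl2 rtrancl_trancl_trancl)
qed simp

lemma rtrancl_imp_chain: "(x, y) \<in> M\<^sup>* \<Longrightarrow> \<exists>ps. chain E M x ps y"
proof (induction rule: rtrancl_induct)
  case base
  have "chain E M x [] x" by simp
  then show ?case ..
next
  case (step y z)
  then obtain ps where "chain E M x ps y" by blast
  with step.hyps(2) have "chain E M x (ps @ [(y, z)]) z" by (auto simp: chain_append)
  then show ?case ..
qed

lemma trancl_imp_cyclic_chain:
  assumes "(x, x) \<in> M\<^sup>+"
  shows "\<exists>ps. ps \<noteq> [] \<and> chain E M x ps x"
proof -
  obtain c where "(x, c) \<in> M" "(c, x) \<in> M\<^sup>*"
    using assms by (meson converse_tranclE trancl_into_rtrancl)
  moreover obtain ps where "chain E M c ps x" using rtrancl_imp_chain[OF \<open>(c, x) \<in> M\<^sup>*\<close>] ..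
  ultimately have "chain E M x ((x, c) # ps) x" by simp
  then show ?thesis by blast
qed

lemma chain_split_segment:
  "chain E M x (pre @ (w, z) # mid @ (w', z') # post) y \<longleftrightarrow>
     chain E M x pre w \<and> chain E M w ((w, z) # mid @ [(w', z')]) z' \<and> chain E M z' post y"
  by (auto simp: chain_append_Cons chain_append intro: chain_rtrancl_left chain_rtrancl_right)

section \<open>Atomic types over a tuple\<close>

definition atomic_type :: "'a rel \<Rightarrow> 'a list \<Rightarrow> 'a \<Rightarrow> 'a + (bool \<times> bool) list" where
  "atomic_type E as u =
     (if u \<in> set as then Inl u else Inr (map (\<lambda>a. ((u, a) \<in> E, (a, u) \<in> E)) as))"

definition type_bound :: "nat \<Rightarrow> nat" where
  "type_bound k = k + 4 ^ k"

lemma finite_card_bool_pair_lists: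
  "finite {cs :: (bool \<times> bool) list. length cs = n}"
  "card {cs :: (bool \<times> bool) list. length cs = n} = 4 ^ n"
proof -
  have "card (UNIV :: (bool \<times> bool) set) = 4"
    by (simp flip: UNIV_Times_UNIV add: card_cartesian_product card_UNIV_bool)
  then show "finite {cs :: (bool \<times> bool) list. length cs = n}"
    "card {cs :: (bool \<times> bool) list. length cs = n} = 4 ^ n"
    using finite_lists_length_eq[of "UNIV :: (bool \<times> bool) set" n]
      card_lists_length_eq[of "UNIV :: (bool \<times> bool) set" n]
    by simp_all
qed

lemma distinct_atomic_types_length:
  fixes as :: "'a list"
  assumes "distinct (map (atomic_type E as) us)"
  shows "length us \<le> type_bound (length as)"
proof -
  let ?C = "{cs :: (bool \<times> bool) list. length cs = length as}"
  have "length us = card (atomic_type E as ` set us)"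
    using assms by (simp add: distinct_map distinct_card card_image)
  also have "\<dots> \<le> card (Inl ` set as \<union> Inr ` ?C)"
    by (rule card_mono) (auto simp: atomic_type_def finite_card_bool_pair_lists)
  also have "\<dots> \<le> card (Inl ` set as :: ('a + (bool \<times> bool) list) set) +
      card (Inr ` ?C :: ('a + (bool \<times> bool) list) set)"
    by (rule card_Un_le)
  also have "\<dots> \<le> length as + 4 ^ length as"
  proof (rule add_mono)
    show "card (Inl ` set as :: ('a + (bool \<times> bool) list) set) \<le> length as"
      using card_length[of as] by (simp add: card_image)
    show "card (Inr ` ?C :: ('a + (bool \<times> bool) list) set) \<le> 4 ^ length as"
      by (simp add: card_image finite_card_bool_pair_lists)
  qed
  finally show ?thesis by (simp add: type_bound_def)
qed

lemma atomic_type_eqD: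
  assumes "atomic_type E as w = atomic_type E as w'" and "w \<noteq> w'"
  shows "w \<notin> set as" and "w' \<notin> set as"
    and "c \<in> set as \<Longrightarrow> ((w, c) \<in> E \<longleftrightarrow> (w', c) \<in> E) \<and> ((c, w) \<in> E \<longleftrightarrow> (c, w') \<in> E)"
proof -
  show nas: "w \<notin> set as" "w' \<notin> set as"
    using assms by (auto simp: atomic_type_def split: if_splits)
  assume "c \<in> set as"
  moreover have "map (\<lambda>a. ((w, a) \<in> E, (a, w) \<in> E)) as = map (\<lambda>a. ((w', a) \<in> E, (a, w') \<in> E)) as"
    using assms(1) nas by (simp add: atomic_type_def)
  ultimately show "((w, c) \<in> E \<longleftrightarrow> (w', c) \<in> E) \<and> ((c, w) \<in> E \<longleftrightarrow> (c, w') \<in> E)"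
    by (simp add: map_eq_conv)
qed

lemma not_distinct_map_decomp:
  assumes "\<not> distinct (map f xs)"
  obtains ys x zs y us where "xs = ys @ x # zs @ y # us" "f x = f y"
proof -
  obtain as b bs cs where "map f xs = as @ [b] @ bs @ [b] @ cs"
    using not_distinct_decomp[OF assms] by blast
  then show ?thesis using that
    by (fastforce simp: map_eq_append_conv append_eq_map_conv Cons_eq_map_conv)
qed

text \<open>The two steps are found among the first \<open>type_bound (length as) + 1\<close> ones, so that on longer
  chains the remainder \<open>post\<close> is nonempty.\<close>
lemma long_chain_same_type:
  assumes "type_bound (length as) < length ps"
  obtains pre w z mid w' z' post where "ps = pre @ (w, z) # mid @ (w', z') # post"
    and "atomic_type E as w = atomic_type E as w'"
    and "length pre + length mid + 2 \<le> Suc (type_bound (length as))"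
proof -
  let ?K = "type_bound (length as)"
  have "\<not> distinct (map (atomic_type E as \<circ> fst) (take (Suc ?K) ps))"
    using distinct_atomic_types_length[of E as "map fst (take (Suc ?K) ps)"] assms by auto
  then obtain pre p mid q post where take: "take (Suc ?K) ps = pre @ p # mid @ q # post"
    and ty: "(atomic_type E as \<circ> fst) p = (atomic_type E as \<circ> fst) q"
    by (rule not_distinct_map_decomp)
  obtain w z w' z' where "p = (w, z)" "q = (w', z')" by fastforce
  moreover have "ps = pre @ p # mid @ q # (post @ drop (Suc ?K) ps)"
    using take by (metis append_Cons append_assoc append_take_drop_id)
  moreover have "length pre + length mid + 2 \<le> Suc ?K"
    using arg_cong[OF take, of length] assms by simp
  ultimately show ?thesis
    using that[of pre w z mid w' z' "post @ drop (Suc ?K) ps"] ty by simp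
qed

section \<open>Shortening chains of a quantifier-free insertion\<close>

definition binary_on :: "nat set \<Rightarrow> nat list set \<Rightarrow> bool" where
  "binary_on D G \<longleftrightarrow> (\<forall>bs\<in>G. length bs = 2 \<and> set bs \<subseteq> D)"

lemma binary_on_apply_change: "binary_on D (apply_change D \<rho> as G)" if "binary_on D G"
  using that by (auto simp: binary_on_def apply_change_def split: option.splits)

lemma edges_subset_binary_on: "binary_on D G \<Longrightarrow> edges G \<subseteq> D \<times> D"
  by (auto simp: binary_on_def edges_def)

locale qf_insertion =
  fixes D :: "nat set" and G :: "nat list set" and \<rho> :: gquery and as :: "nat list"
    and \<mu> :: "(sym, var) fm"
  assumes query: "qf_insertion_query \<rho>" and rule: "rule \<rho> = Some \<mu>"
    and arity: "length as = nparams \<rho>"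
    and graph: "binary_on D G" and dag: "acyclic (edges G)"
begin

abbreviation E :: "nat rel" where "E \<equiv> edges G"
abbreviation M :: "nat rel" where "M \<equiv> edges (apply_change D \<rho> as G)"
abbreviation K :: nat where "K \<equiv> type_bound (length as)"

lemma qfree_mu: "qfree \<mu>"
  and rels_mu: "rels \<mu> \<subseteq> {Edge}"
  and fvars_mu: "fvars \<mu> \<subseteq> param_vars (length as) \<union> tuple_vars 2"
  using query rule arity by (auto simp: qf_insertion_query_def wf_gquery_def)

lemma M_iff:
  "(u, w) \<in> M \<longleftrightarrow> u \<in> D \<and> w \<in> D \<and> holds D (\<lambda>r. if r = Edge then G else {}) (env as [u, w]) \<mu>"
  by (simp add: edges_def apply_change_def rule)

lemma M_subset: "M \<subseteq> D \<times> D"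
  using M_iff by auto

lemma E_subset_M: "E \<subseteq> M"
proof
  fix p assume "p \<in> E"
  then obtain u w where p: "p = (u, w)" "[u, w] \<in> G" by (auto simp: edges_def)
  moreover have "u \<in> D" "w \<in> D" using p graph by (auto simp: binary_on_def)
  moreover obtain \<phi> where "\<mu> = Disj (Rel Edge [X 0, X 1]) \<phi>"
    using query rule by (auto simp: qf_insertion_query_def)
  ultimately show "p \<in> M" by (simp add: M_iff env_def)
qed

text \<open>The heart of the argument: a quantifier-free \<open>\<mu>\<close> cannot tell apart two vertices of the
  same atomic type over \<open>as\<close>, as long as no edge links them to the other endpoint.\<close>
lemma same_type_edge_transfer:
  assumes M: "(w', z') \<in> M" and ty: "atomic_type E as w = atomic_type E as w'" and "w \<in> D"
    and ne: "w \<noteq> w'" "w \<noteq> z'" "w' \<noteq> z'"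
    and no_edges: "(w, z') \<notin> E" "(w', z') \<notin> E" "(z', w) \<notin> E" "(z', w') \<notin> E"
  shows "(w, z') \<in> M"
proof -
  define S where "S = insert w' (insert z' (set as))"
  define f where "f = id (w' := w)"
  define I where "I = (\<lambda>r. if r = Edge then G else {})"
  note nas = atomic_type_eqD(1,2)[OF ty ne(1)]
  have same_nbrs: "((w, c) \<in> E \<longleftrightarrow> (w', c) \<in> E) \<and> ((c, w) \<in> E \<longleftrightarrow> (c, w') \<in> E)"
    if "c \<in> insert z' (set as)" for c
    using that no_edges atomic_type_eqD(3)[OF ty ne(1)] by auto
  have irrefl: "(w, w) \<notin> E" "(w', w') \<notin> E"
    using dag by (auto simp: acyclic_def)
  have "(f a, f b) \<in> E \<longleftrightarrow> (a, b) \<in> E" if "a \<in> S" "b \<in> S" for a b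
    using that same_nbrs[of a] same_nbrs[of b] irrefl by (auto simp: S_def f_def)
  then have iso: "map f xs \<in> I r \<longleftrightarrow> xs \<in> I r" if "set xs \<subseteq> S" for r xs
    using that graph
    by (auto simp: I_def edges_def binary_on_def length_Suc_conv numeral_2_eq_2)
  have inj: "inj_on f S"
    using ne nas by (auto simp: S_def f_def inj_on_def)
  have vars: "env as [w', z'] ` fvars \<mu> \<subseteq> S"
    using fvars_mu by (auto simp: S_def env_def param_vars_def tuple_vars_def less_2_cases_iff)
  have "holds D I (env as [w', z']) \<mu>"
    using M by (simp add: M_iff I_def)
  then have "holds D I (f \<circ> env as [w', z']) \<mu>"
    using holds_qfree_comp_inj_on[OF qfree_mu vars inj iso] by simp
  moreover have "(f \<circ> env as [w', z']) x = env as [w, z'] x" if "x \<in> fvars \<mu>" for x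
  proof -
    from that fvars_mu have "x \<in> param_vars (length as) \<union> tuple_vars 2" by blast
    then show ?thesis
      using nas ne(3) by (cases rule: param_tuple_vars_2_cases) (auto simp: f_def env_def)
  qed
  then have "holds D I (f \<circ> env as [w', z']) \<mu> = holds D I (env as [w, z']) \<mu>"
    by (intro holds_cong_val) blast
  ultimately have "holds D I (env as [w, z']) \<mu>" by simp
  moreover have "z' \<in> D" using M M_subset by auto
  ultimately show "(w, z') \<in> M" using \<open>w \<in> D\<close> by (simp add: M_iff I_def)
qed

lemma same_type_edge:
  assumes "(w', z') \<in> M" and "atomic_type E as w = atomic_type E as w'" and "w \<in> D"
  shows "w = w' \<or> (w, z') \<in> E\<^sup>* \<or> (w', z') \<in> E\<^sup>* \<or> (z', w) \<in> E \<or> (z', w') \<in> E \<or> (w, z') \<in> M"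
  using same_type_edge_transfer[OF assms] by (metis r_into_rtrancl rtrancl.rtrancl_refl)

lemma segment_shorten:
  assumes seg: "chain E M w ((w, z) # mid @ [(w', z')]) z'"
    and ty: "atomic_type E as w = atomic_type E as w'"
  obtains (shorter) qs where "chain E M w qs z'" "length qs \<le> Suc (length mid)"
    | (cycle) c qs where "qs \<noteq> []" "chain E M c qs c" "length qs \<le> length mid + 2"
proof -
  from seg obtain m where wz: "(w, z) \<in> M" and mid: "chain E M z mid m"
    and mw': "(m, w') \<in> E\<^sup>*" and wz': "(w', z') \<in> M"
    by (auto simp: chain_append)
  have "w \<in> D" using wz M_subset by auto
  from same_type_edge[OF wz' ty this] consider "w = w'" | "(w, z') \<in> E\<^sup>*" | "(w', z') \<in> E\<^sup>*"
    | "(z', w) \<in> E" | "(z', w') \<in> E" | "(w, z') \<in> M"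
    by blast
  then show ?thesis
  proof cases
    case 1
    with wz chain_rtrancl_right[OF mid mw'] show ?thesis by (intro cycle[of "(w, z) # mid" w]) simp_all
  next
    case 2
    then show ?thesis by (intro shorter[of "[]"]) simp_all
  next
    case 3
    with wz chain_rtrancl_right[OF mid rtrancl_trans[OF mw' 3]] show ?thesis
      by (intro shorter[of "(w, z) # mid"]) simp_all
  next
    case 4
    with chain_rtrancl_right[OF seg r_into_rtrancl] show ?thesis
      by (intro cycle[of "(w, z) # mid @ [(w', z')]" w]) simp_all
  next
    case 5
    with wz' show ?thesis by (intro cycle[of "[(w', z')]" w']) simp_all
  next
    case 6
    then show ?thesis by (intro shorter[of "[(w, z')]"]) simp_all
  qed
qed

lemma chain_shorten:
  assumes "acyclic M" and ch: "chain E M x ps y" and "K < length ps"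
  obtains qs where "chain E M x qs y" "length qs < length ps"
proof -
  obtain pre w z mid w' z' post where ps: "ps = pre @ (w, z) # mid @ (w', z') # post"
    and ty: "atomic_type E as w = atomic_type E as w'"
    using long_chain_same_type[OF \<open>K < length ps\<close>, where E = E] by metis
  from ch ps have pre: "chain E M x pre w" and seg: "chain E M w ((w, z) # mid @ [(w', z')]) z'"
    and post: "chain E M z' post y"
    by (simp_all add: chain_split_segment)
  show ?thesis
  proof (rule segment_shorten[OF seg ty])
    fix qs assume "chain E M w qs z'" "length qs \<le> Suc (length mid)"
    with pre post ps show ?thesis
      by (intro that[of "pre @ qs @ post"]) (auto simp: chain_append)
  next
    fix c qs assume "qs \<noteq> []" "chain E M c qs c"
    then have "(c, c) \<in> M\<^sup>+" using chain_imp_trancl[OF E_subset_M] by blast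
    with \<open>acyclic M\<close> show ?thesis by (simp add: acyclic_def)
  qed
qed

lemma bounded_chain:
  assumes "acyclic M" and "(x, y) \<in> M\<^sup>*"
  obtains ps where "chain E M x ps y" "length ps \<le> K"
proof -
  obtain ps0 where "chain E M x ps0 y" using rtrancl_imp_chain[OF assms(2)] ..
  then obtain ps where ps: "chain E M x ps y"
    and shortest: "\<forall>qs. chain E M x qs y \<longrightarrow> length ps \<le> length qs"
    using ex_has_least_nat[of "\<lambda>ps. chain E M x ps y" ps0 length] by blast
  have "length ps \<le> K"
  proof (rule ccontr)
    assume "\<not> length ps \<le> K"
    then obtain qs where "chain E M x qs y" "length qs < length ps"
      using chain_shorten[OF assms(1) ps] by force
    with shortest show False by fastforce
  qed
  with ps show ?thesis by (rule that)
qed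

lemma cycle_shorten:
  assumes ch: "chain E M x ps x" and "Suc K < length ps"
  obtains c qs where "qs \<noteq> []" "chain E M c qs c" "length qs < length ps"
proof -
  have "K < length ps" using assms by simp
  then obtain pre w z mid w' z' post where ps: "ps = pre @ (w, z) # mid @ (w', z') # post"
    and ty: "atomic_type E as w = atomic_type E as w'"
    and len: "length pre + length mid + 2 \<le> Suc K"
    by (rule long_chain_same_type[where E = E])
  have "post \<noteq> []" using ps len \<open>Suc K < length ps\<close> by auto
  have len_ps: "length ps = length pre + length mid + length post + 2" using ps by simp
  from ch ps have pre: "chain E M x pre w" and seg: "chain E M w ((w, z) # mid @ [(w', z')]) z'"
    and post: "chain E M z' post x"
    by (simp_all add: chain_split_segment)
  show ?thesis
  proof (rule segment_shorten[OF seg ty])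
    fix qs assume "chain E M w qs z'" "length qs \<le> Suc (length mid)"
    with pre post ps \<open>post \<noteq> []\<close> show ?thesis
      by (intro that[of "pre @ qs @ post" x]) (auto simp: chain_append)
  next
    fix c qs assume ne: "qs \<noteq> []" and cyc: "chain E M c qs c" and "length qs \<le> length mid + 2"
    with len_ps \<open>post \<noteq> []\<close> have "length qs < length ps" by (cases post) auto
    with ne cyc show ?thesis by (rule that)
  qed
qed

lemma bounded_cycle:
  assumes "\<not> acyclic M"
  obtains c ps where "c \<in> D" "ps \<noteq> []" "chain E M c ps c" "length ps \<le> Suc K"
proof -
  from assms obtain x where "(x, x) \<in> M\<^sup>+" unfolding acyclic_def by metis
  then obtain ps0 where "ps0 \<noteq> [] \<and> (\<exists>c. chain E M c ps0 c)"
    using trancl_imp_cyclic_chain by metis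
  then obtain ps where cyc: "ps \<noteq> []" "\<exists>c. chain E M c ps c"
    and shortest: "\<forall>qs. qs \<noteq> [] \<and> (\<exists>c. chain E M c qs c) \<longrightarrow> length ps \<le> length qs"
    using ex_has_least_nat[of "\<lambda>ps. ps \<noteq> [] \<and> (\<exists>c. chain E M c ps c)" ps0 length] by blast
  from cyc(2) obtain c where c: "chain E M c ps c" ..
  have "length ps \<le> Suc K"
  proof (rule ccontr)
    assume "\<not> length ps \<le> Suc K"
    then have "Suc K < length ps" by simp
    then obtain c' qs where "qs \<noteq> []" "chain E M c' qs c'" "length qs < length ps"
      by (rule cycle_shorten[OF c])
    with shortest show False by (meson leD)
  qed
  moreover have "c \<in> D"
    using chain_imp_trancl[OF E_subset_M c cyc(1)] trancl_subset_Sigma[OF M_subset]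
    by (meson mem_Sigma_iff subsetD)
  ultimately show ?thesis using cyc(1) c that by blast
qed

end

section \<open>Formulas for reachability\<close>

definition reach_fm :: "var \<Rightarrow> var \<Rightarrow> (sym, var) fm" where
  "reach_fm x y = Disj (Eq x y) (Rel (Aux 0) [x, y])"

text \<open>Auxiliary relation \<open>Aux 0\<close> holds the reachability relation of the current graph, up to the
  diagonal: the diagonal is missing in the initial empty state.\<close>
definition reach_inv :: "nat set \<Rightarrow> state \<Rightarrow> bool" where
  "reach_inv D s \<longleftrightarrow>
     (\<forall>u\<in>D. \<forall>w\<in>D. (u = w \<or> [u, w] \<in> s (Aux 0)) \<longleftrightarrow> (u, w) \<in> (edges (s Edge))\<^sup>*)"

lemma holds_reach_fm:
  "reach_inv D s \<Longrightarrow> v x \<in> D \<Longrightarrow> v y \<in> D \<Longrightarrow>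
     holds D s v (reach_fm x y) \<longleftrightarrow> (v x, v y) \<in> (edges (s Edge))\<^sup>*"
  by (simp add: reach_fm_def reach_inv_def)

lemma fvars_reach_fm [simp]: "fvars (reach_fm x y) = {x, y}"
  and rels_reach_fm [simp]: "rels (reach_fm x y) = {Aux 0}"
  by (auto simp: reach_fm_def)

definition tuple_subst :: "var \<Rightarrow> var \<Rightarrow> var \<Rightarrow> var" where
  "tuple_subst a b x = (case x of X j \<Rightarrow> if j = 0 then a else b | _ \<Rightarrow> x)"

text \<open>A chain with \<open>n\<close> \<open>\<mu>\<close>-steps from \<open>x\<close> to \<open>y\<close>; the step bound at depth \<open>i\<close> is
  \<open>\<mu>(p; V (2 * i), V (2 * i + 1))\<close>, obtained by renaming the tuple variables of \<open>\<mu>\<close>.\<close>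
fun chain_fm :: "(sym, var) fm \<Rightarrow> nat \<Rightarrow> var \<Rightarrow> var \<Rightarrow> (sym, var) fm" where
  "chain_fm \<mu> 0 x y = reach_fm x y"
| "chain_fm \<mu> (Suc n) x y =
     Ex (V (2 * n)) (Ex (V (2 * n + 1))
       (Conj (reach_fm x (V (2 * n)))
         (Conj (ren (tuple_subst (V (2 * n)) (V (2 * n + 1))) \<mu>) (chain_fm \<mu> n (V (2 * n + 1)) y))))"

lemma fvars_chain_fm:
  assumes "qfree \<mu>" and "fvars \<mu> \<subseteq> param_vars k \<union> tuple_vars 2"
  shows "fvars (chain_fm \<mu> n x y) \<subseteq> {x, y} \<union> param_vars k"
proof (induction n arbitrary: x y)
  case (Suc n)
  have "tuple_subst a b x \<in> {a, b} \<union> param_vars k" if "x \<in> fvars \<mu>" for a b x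
  proof -
    from that assms(2) have "x \<in> param_vars k \<union> tuple_vars 2" by blast
    then show ?thesis
      by (cases rule: param_tuple_vars_2_cases) (auto simp: tuple_subst_def param_vars_def)
  qed
  with Suc.IH[of "V (2 * n + 1)" y] show ?case by (auto simp: fvars_ren[OF assms(1)])
qed simp

lemma rels_chain_fm: "rels \<mu> \<subseteq> {Edge} \<Longrightarrow> rels (chain_fm \<mu> n x y) \<subseteq> {Edge, Aux 0}"
  by (induction n arbitrary: x y) auto

definition ins_reach_fm :: "(sym, var) fm \<Rightarrow> nat \<Rightarrow> (sym, var) fm" where
  "ins_reach_fm \<mu> k = Disj_list (map (\<lambda>i. chain_fm \<mu> i (X 0) (X 1)) [0..<Suc (type_bound k)])"

text \<open>The cycle variable \<open>V (2 * Suc (type_bound k))\<close> is not bound inside the chain formulas used.\<close>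
definition cycle_fm :: "(sym, var) fm \<Rightarrow> nat \<Rightarrow> (sym, var) fm" where
  "cycle_fm \<mu> k = (let x = V (2 * Suc (type_bound k)) in
     Ex x (Disj_list (map (\<lambda>i. chain_fm \<mu> i x x) [1..<Suc (Suc (type_bound k))])))"

lemma fvars_ins_reach_fm:
  assumes "qfree \<mu>" and "fvars \<mu> \<subseteq> param_vars k \<union> tuple_vars 2"
  shows "fvars (ins_reach_fm \<mu> k) \<subseteq> param_vars k \<union> tuple_vars 2"
  unfolding ins_reach_fm_def
proof (rule fvars_Disj_list)
  fix \<phi> assume "\<phi> \<in> set (map (\<lambda>i. chain_fm \<mu> i (X 0) (X 1)) [0..<Suc (type_bound k)])"
  then obtain i where "\<phi> = chain_fm \<mu> i (X 0) (X 1)" by auto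
  then show "fvars \<phi> \<subseteq> param_vars k \<union> tuple_vars 2"
    using fvars_chain_fm[OF assms, of i "X 0" "X 1"] by (auto simp: tuple_vars_def)
qed

lemma fvars_cycle_fm:
  assumes "qfree \<mu>" and "fvars \<mu> \<subseteq> param_vars k \<union> tuple_vars 2"
  shows "fvars (cycle_fm \<mu> k) \<subseteq> param_vars k"
proof -
  let ?x = "V (2 * Suc (type_bound k))"
  have "fvars (Disj_list (map (\<lambda>i. chain_fm \<mu> i ?x ?x) [1..<Suc (Suc (type_bound k))]))
      \<subseteq> insert ?x (param_vars k)"
  proof (rule fvars_Disj_list)
    fix \<phi> assume "\<phi> \<in> set (map (\<lambda>i. chain_fm \<mu> i ?x ?x) [1..<Suc (Suc (type_bound k))])"
    then obtain i where "\<phi> = chain_fm \<mu> i ?x ?x" by (auto simp del: upt_Suc)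
    then show "fvars \<phi> \<subseteq> insert ?x (param_vars k)"
      using fvars_chain_fm[OF assms, of i ?x ?x] by auto
  qed
  then show ?thesis by (auto simp: cycle_fm_def Let_def simp del: upt_Suc)
qed

lemma rels_ins_reach_fm: "rels \<mu> \<subseteq> {Edge} \<Longrightarrow> rels (ins_reach_fm \<mu> k) \<subseteq> {Edge, Aux 0}"
  unfolding ins_reach_fm_def by (intro rels_Disj_list) (auto dest: rels_chain_fm simp del: upt_Suc)

lemma rels_cycle_fm: "rels \<mu> \<subseteq> {Edge} \<Longrightarrow> rels (cycle_fm \<mu> k) \<subseteq> {Edge, Aux 0}"
  unfolding cycle_fm_def Let_def rels.simps
  by (intro rels_Disj_list) (auto dest: rels_chain_fm simp del: upt_Suc)

context qf_insertion
begin

lemma holds_tuple_subst: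
  assumes "s Edge = G" and "\<forall>i<length as. v (P i) = as ! i" and "v a \<in> D" and "v b \<in> D"
  shows "holds D s v (ren (tuple_subst a b) \<mu>) \<longleftrightarrow> (v a, v b) \<in> M"
proof -
  let ?I = "\<lambda>r. if r = Edge then G else {}"
  have "holds D s v (ren (tuple_subst a b) \<mu>) = holds D s (v \<circ> tuple_subst a b) \<mu>"
    by (rule holds_ren[OF qfree_mu])
  also have "\<dots> = holds D ?I (v \<circ> tuple_subst a b) \<mu>"
    using rels_mu assms(1) by (intro holds_cong_rels) auto
  also have "\<dots> = holds D ?I (env as [v a, v b]) \<mu>"
  proof (rule holds_cong_val, rule ballI)
    fix x assume "x \<in> fvars \<mu>"
    with fvars_mu have "x \<in> param_vars (length as) \<union> tuple_vars 2" by blast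
    then show "(v \<circ> tuple_subst a b) x = env as [v a, v b] x"
      using assms(2)
      by (cases rule: param_tuple_vars_2_cases) (simp_all add: tuple_subst_def env_def)
  qed
  finally show ?thesis using assms(3,4) by (simp add: M_iff)
qed

lemma holds_chain_fm:
  assumes inv: "reach_inv D s" and sE: "s Edge = G" and vP: "\<forall>i<length as. v (P i) = as ! i"
    and "x \<notin> V ` {..<2 * n}" and "y \<notin> V ` {..<2 * n}" and "v x \<in> D" and "v y \<in> D"
  shows "holds D s v (chain_fm \<mu> n x y) \<longleftrightarrow> (\<exists>ps. length ps = n \<and> chain E M (v x) ps (v y))"
  using assms(3-)
proof (induction n arbitrary: v x)
  case 0
  then show ?case using holds_reach_fm[OF inv] sE by simp
next
  case (Suc n)
  let ?a = "V (2 * n)" and ?b = "V (2 * n + 1)"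
  have ne: "x \<noteq> ?a" "x \<noteq> ?b" "y \<noteq> ?a" "y \<noteq> ?b" using Suc.prems by auto
  have "holds D s (v(?a := d, ?b := e))
      (Conj (reach_fm x ?a) (Conj (ren (tuple_subst ?a ?b) \<mu>) (chain_fm \<mu> n ?b y)))
      \<longleftrightarrow> (v x, d) \<in> E\<^sup>* \<and> (d, e) \<in> M \<and> (\<exists>ps. length ps = n \<and> chain E M e ps (v y))"
    if "d \<in> D" "e \<in> D" for d e
  proof -
    let ?v = "v(?a := d, ?b := e)"
    have "holds D s ?v (chain_fm \<mu> n ?b y) \<longleftrightarrow> (\<exists>ps. length ps = n \<and> chain E M (?v ?b) ps (?v y))"
      by (rule Suc.IH) (use Suc.prems ne that in auto)
    then show ?thesis
      using that Suc.prems ne by (simp add: holds_reach_fm[OF inv] sE holds_tuple_subst)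
  qed
  then have "holds D s v (chain_fm \<mu> (Suc n) x y) \<longleftrightarrow>
      (\<exists>d\<in>D. \<exists>e\<in>D. (v x, d) \<in> E\<^sup>* \<and> (d, e) \<in> M \<and> (\<exists>ps. length ps = n \<and> chain E M e ps (v y)))"
    by simp
  also have "\<dots> \<longleftrightarrow> (\<exists>ps. length ps = Suc n \<and> chain E M (v x) ps (v y))"
    using M_subset by (fastforce simp: length_Suc_conv)
  finally show ?case .
qed

lemma holds_ins_reach_fm:
  assumes inv: "reach_inv D s" and sE: "s Edge = G" and "acyclic M" and "u \<in> D" and "w \<in> D"
  shows "holds D s (env as [u, w]) (ins_reach_fm \<mu> (length as)) \<longleftrightarrow> (u, w) \<in> M\<^sup>*"
proof -
  have "holds D s (env as [u, w]) (chain_fm \<mu> i (X 0) (X 1)) \<longleftrightarrow>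
      (\<exists>ps. length ps = i \<and> chain E M u ps w)" for i
    using holds_chain_fm[OF inv sE, of "env as [u, w]" "X 0" i "X 1"] assms(4,5)
    by (auto simp: env_def)
  then have "holds D s (env as [u, w]) (ins_reach_fm \<mu> (length as)) \<longleftrightarrow>
      (\<exists>i\<in>{..<Suc K}. \<exists>ps. length ps = i \<and> chain E M u ps w)"
    by (simp add: ins_reach_fm_def atLeast0LessThan del: upt_Suc)
  also have "\<dots> \<longleftrightarrow> (\<exists>ps. length ps \<le> K \<and> chain E M u ps w)"
    by (fastforce simp: less_Suc_eq_le)
  also have "\<dots> \<longleftrightarrow> (u, w) \<in> M\<^sup>*"
    using bounded_chain[OF \<open>acyclic M\<close>, of u w] chain_imp_rtrancl[OF E_subset_M] by metis
  finally show ?thesis .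
qed

lemma holds_cycle_fm:
  assumes inv: "reach_inv D s" and sE: "s Edge = G"
  shows "holds D s (env as []) (cycle_fm \<mu> (length as)) \<longleftrightarrow> \<not> acyclic M"
proof -
  let ?x = "V (2 * Suc K)"
  have "holds D s ((env as [])(?x := c)) (chain_fm \<mu> i ?x ?x) \<longleftrightarrow>
      (\<exists>ps. length ps = i \<and> chain E M c ps c)" if "c \<in> D" "i < Suc (Suc K)" for c i
  proof -
    have "?x \<notin> V ` {..<2 * i}" using that(2) by auto
    then show ?thesis
      using holds_chain_fm[OF inv sE, of "(env as [])(?x := c)" ?x i ?x] that(1)
      by (simp add: env_def)
  qed
  then have "holds D s (env as []) (cycle_fm \<mu> (length as)) \<longleftrightarrow>
      (\<exists>c\<in>D. \<exists>i\<in>{1..<Suc (Suc K)}. \<exists>ps. length ps = i \<and> chain E M c ps c)"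
    by (simp add: cycle_fm_def Let_def del: upt_Suc)
  also have "\<dots> \<longleftrightarrow> (\<exists>c\<in>D. \<exists>ps. ps \<noteq> [] \<and> chain E M c ps c \<and> length ps \<le> Suc K)"
    by (fastforce simp: less_Suc_eq_le Suc_le_eq)
  also have "\<dots> \<longleftrightarrow> \<not> acyclic M"
  proof
    assume "\<exists>c\<in>D. \<exists>ps. ps \<noteq> [] \<and> chain E M c ps c \<and> length ps \<le> Suc K"
    then obtain c ps where "ps \<noteq> []" "chain E M c ps c" by metis
    then have "(c, c) \<in> M\<^sup>+" using chain_imp_trancl[OF E_subset_M] by metis
    then show "\<not> acyclic M" unfolding acyclic_def by metis
  next
    assume "\<not> acyclic M"
    then show "\<exists>c\<in>D. \<exists>ps. ps \<noteq> [] \<and> chain E M c ps c \<and> length ps \<le> Suc K"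
      by (rule bounded_cycle) metis
  qed
  finally show ?thesis .
qed

end

section \<open>Deleting an edge from a DAG\<close>

lemma rtrancl_Diff_edge_cases:
  assumes "(x, z) \<in> E\<^sup>*"
  shows "(x, z) \<in> (E - {(a, b)})\<^sup>* \<or> ((a, b) \<in> E \<and> (x, a) \<in> E\<^sup>* \<and> (b, z) \<in> E\<^sup>*)"
  using assms
proof (induction rule: rtrancl_induct)
  case (step y z)
  show ?case
  proof (cases "(y, z) = (a, b)")
    case True
    with step.hyps show ?thesis by simp
  next
    case False
    with step.hyps(2) have "(y, z) \<in> E - {(a, b)}" by simp
    with step.IH step.hyps(2) show ?thesis by (meson rtrancl.rtrancl_into_rtrancl)
  qed
qed simp

lemma rtrancl_Diff_edge_exit:
  assumes "(x, z) \<in> (E - {(a, b)})\<^sup>*" and "(x, a) \<in> E\<^sup>*"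
  shows "(z, a) \<in> E\<^sup>* \<or>
    (\<exists>u w. (x, u) \<in> E\<^sup>* \<and> (u, w) \<in> E - {(a, b)} \<and> (u, a) \<in> E\<^sup>* \<and> (w, a) \<notin> E\<^sup>* \<and> (w, z) \<in> E\<^sup>*)"
  using assms(1)
proof (induction rule: rtrancl_induct)
  case base
  with assms(2) show ?case by simp
next
  case (step y z)
  have xy: "(x, y) \<in> E\<^sup>*"
    using step.hyps(1) rtrancl_mono[of "E - {(a, b)}" E] by (meson Diff_subset subsetD)
  from step.IH show ?case
  proof
    assume ya: "(y, a) \<in> E\<^sup>*"
    show ?case
    proof (cases "(z, a) \<in> E\<^sup>*")
      case False
      with xy ya step.hyps(2) show ?thesis by (intro disjI2 exI[of _ y] exI[of _ z]) simp
    qed simp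
  next
    assume "\<exists>u w. (x, u) \<in> E\<^sup>* \<and> (u, w) \<in> E - {(a, b)} \<and> (u, a) \<in> E\<^sup>* \<and> (w, a) \<notin> E\<^sup>* \<and>
      (w, y) \<in> E\<^sup>*"
    with step.hyps(2) show ?case by (meson DiffD1 rtrancl.rtrancl_into_rtrancl)
  qed
qed

lemma acyclic_rtrancl_Diff_edge_iff:
  assumes "acyclic E"
  shows "(x, y) \<in> (E - {(a, b)})\<^sup>* \<longleftrightarrow> (x, y) \<in> E\<^sup>* \<and>
    (\<not> ((a, b) \<in> E \<and> (x, a) \<in> E\<^sup>* \<and> (b, y) \<in> E\<^sup>*) \<or>
     (\<exists>u w. (x, u) \<in> E\<^sup>* \<and> (u, w) \<in> E - {(a, b)} \<and> (u, a) \<in> E\<^sup>* \<and> (w, a) \<notin> E\<^sup>* \<and>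
        (w, y) \<in> E\<^sup>*))"
    (is "?L \<longleftrightarrow> _ \<and> (\<not> ?via_ab \<or> ?exit)")
proof
  have no_return: "(b, a) \<notin> E\<^sup>*" if "(a, b) \<in> E"
    using assms that unfolding acyclic_def by (meson rtrancl_into_trancl2)
  show "?L \<Longrightarrow> (x, y) \<in> E\<^sup>* \<and> (\<not> ?via_ab \<or> ?exit)"
  proof
    assume ?L
    then show "(x, y) \<in> E\<^sup>*" using rtrancl_mono[of "E - {(a, b)}" E] by (meson Diff_subset subsetD)
    show "\<not> ?via_ab \<or> ?exit"
      using rtrancl_Diff_edge_exit[OF \<open>?L\<close>] no_return by (meson rtrancl_trans)
  qed
  assume R: "(x, y) \<in> E\<^sup>* \<and> (\<not> ?via_ab \<or> ?exit)"
  show ?L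
  proof (cases ?exit)
    case True
    then obtain u w where xu: "(x, u) \<in> E\<^sup>*" and uw: "(u, w) \<in> E - {(a, b)}"
      and ua: "(u, a) \<in> E\<^sup>*" and wa: "(w, a) \<notin> E\<^sup>*" and wy: "(w, y) \<in> E\<^sup>*"
      by blast
    have "(x, u) \<in> (E - {(a, b)})\<^sup>*"
      using rtrancl_Diff_edge_cases[OF xu] ua no_return by (meson rtrancl_trans)
    moreover have "(w, y) \<in> (E - {(a, b)})\<^sup>*"
      using rtrancl_Diff_edge_cases[OF wy] wa by blast
    ultimately show ?L using uw by (meson rtrancl.rtrancl_into_rtrancl rtrancl_trans)
  next
    case False
    with R show ?L using rtrancl_Diff_edge_cases[of x y E a b] by blast
  qed
qed

definition del_reach_fm :: "(sym, var) fm" where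
  "del_reach_fm = Conj (reach_fm (X 0) (X 1))
     (Disj (Neg (Conj (Rel Edge [P 0, P 1]) (Conj (reach_fm (X 0) (P 0)) (reach_fm (P 1) (X 1)))))
       (Ex (V 0) (Ex (V 1)
         (Conj (reach_fm (X 0) (V 0))
           (Conj (Conj (Rel Edge [V 0, V 1]) (Neg (Conj (Eq (V 0) (P 0)) (Eq (V 1) (P 1)))))
             (Conj (reach_fm (V 0) (P 0))
               (Conj (Neg (reach_fm (V 1) (P 0))) (reach_fm (V 1) (X 1)))))))))"

lemma holds_del_reach_fm:
  assumes inv: "reach_inv D s" and "binary_on D (s Edge)" and "acyclic (edges (s Edge))"
    and "a \<in> D" "b \<in> D" "x \<in> D" "y \<in> D"
  shows "holds D s (env [a, b] [x, y]) del_reach_fm \<longleftrightarrow> (x, y) \<in> (edges (s Edge) - {(a, b)})\<^sup>*"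
proof -
  let ?E = "edges (s Edge)"
  have mem_edges: "[u, w] \<in> s Edge \<longleftrightarrow> (u, w) \<in> ?E" for u w by (simp add: edges_def)
  have "holds D s (env [a, b] [x, y]) del_reach_fm \<longleftrightarrow> (x, y) \<in> ?E\<^sup>* \<and>
      (\<not> ((a, b) \<in> ?E \<and> (x, a) \<in> ?E\<^sup>* \<and> (b, y) \<in> ?E\<^sup>*) \<or>
       (\<exists>u\<in>D. \<exists>w\<in>D. (x, u) \<in> ?E\<^sup>* \<and> (u, w) \<in> ?E - {(a, b)} \<and> (u, a) \<in> ?E\<^sup>* \<and>
          (w, a) \<notin> ?E\<^sup>* \<and> (w, y) \<in> ?E\<^sup>*))"
    using assms(4-) by (simp add: del_reach_fm_def holds_reach_fm[OF inv] env_def mem_edges conj_ac)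
  also have "\<dots> \<longleftrightarrow> (x, y) \<in> (?E - {(a, b)})\<^sup>*"
    unfolding acyclic_rtrancl_Diff_edge_iff[OF assms(3)]
    using edges_subset_binary_on[OF assms(2)] by blast
  finally show ?thesis .
qed

section \<open>The dynamic program\<close>

definition reach_upd :: "gquery \<Rightarrow> (sym, var) fm" where
  "reach_upd \<rho> = (if \<rho> = del_E then del_reach_fm else
     (case rule \<rho> of None \<Rightarrow> reach_fm (X 0) (X 1) | Some \<mu> \<Rightarrow> ins_reach_fm \<mu> (nparams \<rho>)))"

definition cycle_guard :: "gquery \<Rightarrow> (sym, var) fm" where
  "cycle_guard \<rho> = (case rule \<rho> of None \<Rightarrow> false_fm | Some \<mu> \<Rightarrow> cycle_fm \<mu> (nparams \<rho>))"

definition reach_prog :: dprog where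
  "reach_prog = \<lparr>auxs = {0}, ar = (\<lambda>_. 2), qsym = 0, upd = (\<lambda>\<rho> _. reach_upd \<rho>)\<rparr>"

lemma qf_insertion_query_ins_E: "qf_insertion_query ins_E"
  by (auto simp: qf_insertion_query_def wf_gquery_def ins_E_def param_vars_def tuple_vars_def)

lemma edges_apply_del_E:
  "binary_on D G \<Longrightarrow> edges (apply_change D del_E [a, b] G) = edges G - {(a, b)}"
  by (auto simp: edges_def apply_change_def del_E_def env_def binary_on_def)

lemma holds_reach_upd:
  assumes inv: "reach_inv D s" and G: "binary_on D (s Edge)" and dag: "acyclic (edges (s Edge))"
    and \<rho>: "\<rho> = del_E \<or> qf_insertion_query \<rho>" and as: "length as = nparams \<rho>" "set as \<subseteq> D"
    and dag': "acyclic (edges (apply_change D \<rho> as (s Edge)))" and "u \<in> D" "w \<in> D"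
  shows "holds D s (env as [u, w]) (reach_upd \<rho>) \<longleftrightarrow>
    (u, w) \<in> (edges (apply_change D \<rho> as (s Edge)))\<^sup>*"
proof (cases "\<rho> = del_E")
  case True
  with as obtain a b where "as = [a, b]" "a \<in> D" "b \<in> D"
    by (auto simp: del_E_def numeral_2_eq_2 length_Suc_conv)
  with True show ?thesis
    using holds_del_reach_fm[OF inv G dag] edges_apply_del_E[OF G] \<open>u \<in> D\<close> \<open>w \<in> D\<close>
    by (simp add: reach_upd_def)
next
  case False
  with \<rho> have query: "qf_insertion_query \<rho>" by simp
  show ?thesis
  proof (cases "rule \<rho>")
    case None
    with False show ?thesis
      using holds_reach_fm[OF inv, of "env as [u, w]" "X 0" "X 1"] \<open>u \<in> D\<close> \<open>w \<in> D\<close>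
      by (simp add: reach_upd_def apply_change_def env_def)
  next
    case (Some \<mu>)
    interpret qf_insertion D "s Edge" \<rho> as \<mu>
      using query Some as(1) G dag by unfold_locales
    show ?thesis
      using False Some holds_ins_reach_fm[OF inv refl dag' \<open>u \<in> D\<close> \<open>w \<in> D\<close>] as(1)
      by (simp add: reach_upd_def)
  qed
qed

lemma holds_cycle_guard:
  assumes inv: "reach_inv D s" and G: "binary_on D (s Edge)" and dag: "acyclic (edges (s Edge))"
    and query: "qf_insertion_query \<rho>" and as: "length as = nparams \<rho>"
  shows "holds D s (env as []) (cycle_guard \<rho>) \<longleftrightarrow>
    \<not> acyclic (edges (apply_change D \<rho> as (s Edge)))"
proof (cases "rule \<rho>")
  case None
  with dag show ?thesis by (simp add: cycle_guard_def apply_change_def)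
next
  case (Some \<mu>)
  interpret qf_insertion D "s Edge" \<rho> as \<mu>
    using query Some as G dag by unfold_locales
  show ?thesis using Some as holds_cycle_fm[OF inv refl] by (simp add: cycle_guard_def)
qed

lemma step_reach_prog:
  assumes inv: "reach_inv D s" and G: "binary_on D (s Edge)" and dag: "acyclic (edges (s Edge))"
    and \<rho>: "\<rho> = del_E \<or> qf_insertion_query \<rho>" and as: "length as = nparams \<rho>" "set as \<subseteq> D"
    and dag': "acyclic (edges (apply_change D \<rho> as (s Edge)))"
  shows "step D reach_prog (\<rho>, as) s Edge = apply_change D \<rho> as (s Edge)"
    and "step D reach_prog (\<rho>, as) s (Aux 0) = reach D (apply_change D \<rho> as (s Edge))"
proof -
  show "step D reach_prog (\<rho>, as) s Edge = apply_change D \<rho> as (s Edge)"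
    by (simp add: step_def)
  have "bs \<in> step D reach_prog (\<rho>, as) s (Aux 0) \<longleftrightarrow> bs \<in> reach D (apply_change D \<rho> as (s Edge))"
    for bs
  proof (cases "\<exists>u w. bs = [u, w] \<and> u \<in> D \<and> w \<in> D")
    case True
    then obtain u w where "bs = [u, w]" "u \<in> D" "w \<in> D" by blast
    then show ?thesis
      using holds_reach_upd[OF inv G dag \<rho> as dag', of u w]
      by (simp add: step_def reach_prog_def reach_def)
  next
    case False
    then show ?thesis
      by (auto simp: step_def reach_prog_def reach_def numeral_2_eq_2 length_Suc_conv)
  qed
  then show "step D reach_prog (\<rho>, as) s (Aux 0) = reach D (apply_change D \<rho> as (s Edge))"
    by blast
qed

lemma reach_inv_if_reach: "s (Aux 0) = reach D (s Edge) \<Longrightarrow> reach_inv D s"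
  by (auto simp: reach_inv_def reach_def)

lemma binary_on_inputs: "binary_on D (inputs D cs)"
proof (induction cs rule: rev_induct)
  case (snoc c cs)
  then show ?case by (cases c) (simp add: inputs_def binary_on_apply_change)
qed (simp add: inputs_def binary_on_def)

lemma valid_seq_acyclic: "valid_seq D \<Delta> cs \<Longrightarrow> acyclic (edges (inputs D cs))"
  unfolding valid_seq_def by (metis order_refl take_all)

lemma valid_seq_snoc:
  assumes "valid_seq D \<Delta> (cs @ [(\<rho>, as)])"
  shows "valid_seq D \<Delta> cs" and "\<rho> \<in> \<Delta>" "length as = nparams \<rho>" "set as \<subseteq> D"
proof -
  from assms have acyclic_prefixes:
    "\<forall>n\<le>length (cs @ [(\<rho>, as)]). acyclic (edges (inputs D (take n (cs @ [(\<rho>, as)]))))"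
    unfolding valid_seq_def by blast
  have "acyclic (edges (inputs D (take n cs)))" if "n \<le> length cs" for n
    using acyclic_prefixes[rule_format, of n] that by simp
  with assms show "valid_seq D \<Delta> cs" by (simp add: valid_seq_def)
  from assms show "\<rho> \<in> \<Delta>" "length as = nparams \<rho>" "set as \<subseteq> D"
    by (auto simp: valid_seq_def)
qed

lemma run_reach_prog:
  assumes \<Delta>: "\<forall>\<rho>\<in>\<Delta>. \<rho> = del_E \<or> qf_insertion_query \<rho>" and "valid_seq D \<Delta> cs"
  shows "run D reach_prog cs Edge = inputs D cs \<and> reach_inv D (run D reach_prog cs) \<and>
    (cs \<noteq> [] \<longrightarrow> run D reach_prog cs (Aux 0) = reach D (inputs D cs))"
  using assms(2)
proof (induction cs rule: rev_induct)
  case Nil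
  show ?case by (simp add: run_def inputs_def reach_inv_def edges_def)
next
  case (snoc c cs)
  obtain \<rho> as where c: "c = (\<rho>, as)" by fastforce
  note valid = valid_seq_snoc[OF snoc.prems[unfolded c]]
  let ?s = "run D reach_prog cs"
  from snoc.IH[OF valid(1)] have sE: "?s Edge = inputs D cs" and inv: "reach_inv D ?s"
    by simp_all
  have G: "binary_on D (?s Edge)" and dag: "acyclic (edges (?s Edge))"
    using sE binary_on_inputs valid_seq_acyclic[OF valid(1)] by simp_all
  have inputs: "inputs D (cs @ [c]) = apply_change D \<rho> as (?s Edge)"
    using sE c by (simp add: inputs_def)
  have dag': "acyclic (edges (apply_change D \<rho> as (?s Edge)))"
    using valid_seq_acyclic[OF snoc.prems] inputs by simp
  have run: "run D reach_prog (cs @ [c]) = step D reach_prog (\<rho>, as) ?s"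
    using c by (simp add: run_def)
  note step = step_reach_prog[OF inv G dag \<Delta>[rule_format, OF valid(2)] valid(3,4) dag']
  show ?case using step run inputs reach_inv_if_reach by simp
qed

lemma wf_reach_prog:
  assumes "\<forall>\<rho>\<in>\<Delta>. \<rho> = del_E \<or> qf_insertion_query \<rho>"
  shows "wf_dprog \<Delta> reach_prog"
  unfolding wf_dprog_def
proof (intro conjI ballI)
  fix \<rho> T assume "\<rho> \<in> \<Delta>" "T \<in> auxs reach_prog"
  have "rels (reach_upd \<rho>) \<subseteq> {Edge, Aux 0} \<and>
      fvars (reach_upd \<rho>) \<subseteq> param_vars (nparams \<rho>) \<union> tuple_vars 2"
  proof (cases "\<rho> = del_E")
    case True
    then show ?thesis
      by (auto simp: reach_upd_def del_reach_fm_def reach_fm_def del_E_def param_vars_def tuple_vars_def)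
  next
    case False
    with assms \<open>\<rho> \<in> \<Delta>\<close> have query: "qf_insertion_query \<rho>" by blast
    show ?thesis
    proof (cases "rule \<rho>")
      case None
      with False show ?thesis by (auto simp: reach_upd_def tuple_vars_def)
    next
      case (Some \<mu>)
      with query have "qfree \<mu>" "rels \<mu> \<subseteq> {Edge}"
        "fvars \<mu> \<subseteq> param_vars (nparams \<rho>) \<union> tuple_vars 2"
        by (auto simp: qf_insertion_query_def wf_gquery_def)
      with False Some show ?thesis
        using rels_ins_reach_fm fvars_ins_reach_fm by (simp add: reach_upd_def)
    qed
  qed
  then show "fo_over reach_prog (param_vars (nparams \<rho>) \<union> tuple_vars (ar reach_prog T))
      (upd reach_prog \<rho> T)"
    by (simp add: fo_over_def reach_prog_def)
qed (simp_all add: reach_prog_def)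

lemma fo_over_cycle_guard:
  assumes "qf_insertion_query \<rho>"
  shows "fo_over reach_prog (param_vars (nparams \<rho>)) (cycle_guard \<rho>)"
proof (cases "rule \<rho>")
  case None
  then show ?thesis by (simp add: fo_over_def cycle_guard_def false_fm_def)
next
  case (Some \<mu>)
  with assms have "qfree \<mu>" "rels \<mu> \<subseteq> {Edge}"
    "fvars \<mu> \<subseteq> param_vars (nparams \<rho>) \<union> tuple_vars 2"
    by (auto simp: qf_insertion_query_def wf_gquery_def)
  with Some show ?thesis
    using rels_cycle_fm fvars_cycle_fm by (simp add: fo_over_def cycle_guard_def reach_prog_def)
qed

lemma maintains_reach_dag_reach_prog:
  assumes "\<forall>\<rho>\<in>\<Delta>. \<rho> = del_E \<or> qf_insertion_query \<rho>"
  shows "maintains_reach_dag \<Delta> reach_prog"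
  using wf_reach_prog[OF assms] run_reach_prog[OF assms]
  by (simp add: maintains_reach_dag_def reach_prog_def)

lemma correct_guard_cycle_guard:
  assumes \<Delta>: "\<forall>\<rho>\<in>\<Delta>. \<rho> = del_E \<or> qf_insertion_query \<rho>" and query: "qf_insertion_query \<rho>"
  shows "correct_guard \<Delta> reach_prog \<rho> (cycle_guard \<rho>)"
proof -
  have "holds D (run D reach_prog cs) (env as []) (cycle_guard \<rho>) \<longleftrightarrow>
      \<not> acyclic (edges (apply_change D \<rho> as (inputs D cs)))"
    if "valid_seq D \<Delta> cs" "length as = nparams \<rho>" for D cs as
    using run_reach_prog[OF \<Delta> that(1)] holds_cycle_guard[OF _ _ _ query that(2)]
      binary_on_inputs valid_seq_acyclic[OF that(1)]
    by simp
  with fo_over_cycle_guard[OF query] show ?thesis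
    by (simp add: correct_guard_def)
qed

theorem theorem4p3:
  fixes \<Delta> :: "gquery set"
  assumes "finite \<Delta>"
    and "\<forall>\<rho>\<in>\<Delta>. qf_insertion_query \<rho>"
  shows "\<exists>\<Pi> \<gamma>. maintains_reach_dag (\<Delta> \<union> Delta_E) \<Pi> \<and>
           (\<forall>\<rho>\<in>\<Delta>. correct_guard (\<Delta> \<union> Delta_E) \<Pi> \<rho> (\<gamma> \<rho>))"
proof -
  have \<Delta>: "\<forall>\<rho>\<in>\<Delta> \<union> Delta_E. \<rho> = del_E \<or> qf_insertion_query \<rho>"
    using assms(2) qf_insertion_query_ins_E by (auto simp: Delta_E_def)
  show ?thesis
    using maintains_reach_dag_reach_prog[OF \<Delta>] correct_guard_cycle_guard[OF \<Delta>] assms(2)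
    by blast
qed

end
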